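(* Let $a,b\in C^0(\mathbb{R})$ be even and positive, and let $G\in C^0(\mathbb{R})$ be even with $G(s)\ge G(M)=0$ for all $s\in\mathbb{R}$ and $G(s)>0$ for $s\in[0,M)$, for some $M>0$. Let $m>0$. Then there exists a constant $C^{as}>0$ depending only on $a,b,G,M,m$ (and not on $L$) such that for every $L>0$, with $I=(-L,L)$, $$\mathcal{E}(u,I)\ge C^{as}\quad\text{for all odd } u\in H^1_m(I).$$ Moreover, one can take $$C^{as}:=\inf_{t>0}\Big\{\frac{m_0^2}{\int_0^t 1/a}+2G_0\int_0^t b\Big\},\qquad m_0:=\tfrac12\min\{m,M\},\quad G_0:=\inf_{s\in(0,m_0)}G(s).$$
   Context: $H^1_m(I):=\{u\in H^1(I):u(-L)=-m,\ u(L)=m\}$ and $\mathcal{E}(u,I):=\int_{-L}^L\{\tfrac12(u')^2a(x)+G(u)b(x)\}\,dx$. *)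

theory Defs
  imports "HOL-Analysis.Analysis"
begin

definition test_fun :: "real \<Rightarrow> (real \<Rightarrow> real) \<Rightarrow> bool" where
  "test_fun L \<phi> \<longleftrightarrow>
     (\<forall>k x. ((deriv ^^ k) \<phi>) differentiable (at x)) \<and>
     (\<exists>\<delta>>0. \<forall>x. L - \<delta> \<le> \<bar>x\<bar> \<longrightarrow> \<phi> x = 0)"

definition weak_deriv_on :: "real \<Rightarrow> (real \<Rightarrow> real) \<Rightarrow> (real \<Rightarrow> real) \<Rightarrow> bool" where
  "weak_deriv_on L u v \<longleftrightarrow>
     set_integrable lborel {-L<..<L} v \<and>
     (\<forall>\<phi>. test_fun L \<phi> \<longrightarrow>
        (LINT x:{-L<..<L}|lborel. u x * deriv \<phi> x) = - (LINT x:{-L<..<L}|lborel. v x * \<phi> x))"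

text \<open>u (taken as its continuous representative on [-L,L]) belongs to H^1(-L,L) with weak
  derivative v \<in> L^2(-L,L).\<close>
definition H1_with_deriv :: "real \<Rightarrow> (real \<Rightarrow> real) \<Rightarrow> (real \<Rightarrow> real) \<Rightarrow> bool" where
  "H1_with_deriv L u v \<longleftrightarrow>
     continuous_on {-L..L} u \<and>
     set_borel_measurable lborel {-L<..<L} u \<and>
     set_integrable lborel {-L<..<L} (\<lambda>x. (u x)\<^sup>2) \<and>
     set_borel_measurable lborel {-L<..<L} v \<and>
     set_integrable lborel {-L<..<L} (\<lambda>x. (v x)\<^sup>2) \<and>
     weak_deriv_on L u v"

definition H1m_with_deriv :: "real \<Rightarrow> real \<Rightarrow> (real \<Rightarrow> real) \<Rightarrow> (real \<Rightarrow> real) \<Rightarrow> bool" where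
  "H1m_with_deriv m L u v \<longleftrightarrow> H1_with_deriv L u v \<and> u (-L) = -m \<and> u L = m"

definition energy :: "(real \<Rightarrow> real) \<Rightarrow> (real \<Rightarrow> real) \<Rightarrow> (real \<Rightarrow> real) \<Rightarrow> real
    \<Rightarrow> (real \<Rightarrow> real) \<Rightarrow> (real \<Rightarrow> real) \<Rightarrow> real" where
  "energy a b G L u v = (LINT x:{-L..L}|lborel. (1/2) * (v x)\<^sup>2 * a x + G (u x) * b x)"

definition C_as :: "(real \<Rightarrow> real) \<Rightarrow> (real \<Rightarrow> real) \<Rightarrow> (real \<Rightarrow> real) \<Rightarrow> real \<Rightarrow> real \<Rightarrow> real" where
  "C_as a b G M m =
    (let m0 = (1/2) * min m M;
         G0 = Inf (G ` {0<..<m0})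
     in Inf ((\<lambda>t. m0\<^sup>2 / integral {0..t} (\<lambda>x. 1 / a x) + 2 * G0 * integral {0..t} b) ` {0<..}))"

end

theory Submission
  imports Defs "HOL-Computational_Algebra.Polynomial"
begin

(* An odd u vanishes at 0 and reaches m > m0 at L, so there is a first point \<beta> \<in> (0,L) with
   |u \<beta>| = m0, and |u| \<le> m0 on [-\<beta>,\<beta>], where therefore G(u) \<ge> G0.  Testing the weak derivative
   against smoothed indicators of [x,y] yields u y - u x = \<integral>\<^sub>x\<^sup>y u', so u' has integral \<plusminus>m0 on
   [0,\<beta>] and on [-\<beta>,0]; the weighted Cauchy-Schwarz inequality then gives \<integral> u'\<^sup>2 a \<ge> m0\<^sup>2 / \<integral> 1/a
   on each half.  By evenness of a and b both halves contribute the same bound, so the energy is at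
   least m0\<^sup>2 / \<integral>\<^sub>0\<^sup>\<beta> 1/a + 2 G0 \<integral>\<^sub>0\<^sup>\<beta> b \<ge> C^as.  The infimum C^as is positive because the first
   term dominates for t \<le> 1 and the second for t \<ge> 1. *)

definition smooth :: "(real \<Rightarrow> real) \<Rightarrow> bool" where
  "smooth h \<longleftrightarrow> (\<forall>k x. ((deriv ^^ k) h) differentiable (at x))"

lemma smooth_coinduct:
  assumes step: "\<And>h. P h \<Longrightarrow> (\<forall>x. h differentiable (at x)) \<and> P (deriv h)"
    and "P h"
  shows "smooth h"
proof -
  have "\<forall>h. P h \<longrightarrow> P ((deriv ^^ k) h)" for k
  proof (induction k)
    case 0 then show ?case by simp
  next
    case (Suc k)
    show ?case
      using Suc step by (simp add: funpow_Suc_right del: funpow.simps)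
  qed
  then show ?thesis unfolding smooth_def using step assms(2) by blast
qed

lemma smooth_differentiable: "smooth h \<Longrightarrow> h differentiable (at x)"
  unfolding smooth_def by (metis funpow_0)

lemma smooth_deriv: "smooth h \<Longrightarrow> smooth (deriv h)"
  unfolding smooth_def by (metis comp_apply funpow_Suc_right)

lemma smooth_from_deriv:
  assumes "\<And>x. h differentiable (at x)" "smooth (deriv h)"
  shows "smooth h"
  unfolding smooth_def
proof (intro allI)
  fix k x show "(deriv ^^ k) h differentiable at x"
    using assms by (cases k) (auto simp: smooth_def funpow_Suc_right simp del: funpow.simps)
qed

lemma smooth_const: "smooth (\<lambda>x. c)"
  by (rule smooth_coinduct[where P="\<lambda>h. \<exists>c. h = (\<lambda>x. c)"]) auto

lemma smooth_compose_affine: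
  assumes "smooth f"
  shows "smooth (\<lambda>x. f (c * x + d))"
proof (rule smooth_coinduct[where P="\<lambda>h. \<exists>f e. smooth f \<and> h = (\<lambda>x. e * f (c * x + d))"])
  fix h assume "\<exists>f e. smooth f \<and> h = (\<lambda>x. e * f (c * x + d))"
  then obtain f e where f: "smooth f" and h: "h = (\<lambda>x. e * f (c * x + d))" by blast
  have D: "(h has_real_derivative (e * c * deriv f (c * x + d))) (at x)" for x
  proof -
    have "(f has_real_derivative deriv f (c * x + d)) (at (c * x + d))"
      using smooth_differentiable[OF f] by (simp add: DERIV_deriv_iff_real_differentiable)
    then have "((\<lambda>x. f (c * x + d)) has_real_derivative deriv f (c * x + d) * c) (at x)"
      by (rule DERIV_chain2) (auto intro!: derivative_eq_intros)
    then show ?thesis unfolding h by (auto intro!: derivative_eq_intros simp: algebra_simps)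
  qed
  have "deriv h = (\<lambda>x. (e * c) * deriv f (c * x + d))"
    using D by (intro ext DERIV_imp_deriv)
  then show "(\<forall>x. h differentiable at x) \<and> (\<exists>f e. smooth f \<and> deriv h = (\<lambda>x. e * f (c * x + d)))"
    using D smooth_deriv[OF f] real_differentiable_def by blast
qed (use assms in \<open>auto intro!: exI[of _ f] exI[of _ 1]\<close>)

(* Finite sums of products of smooth functions form a class closed under differentiation
   (Leibniz rule); coinduction over this class gives closure of smoothness under products. *)
definition sum_of_products :: "((real \<Rightarrow> real) \<times> (real \<Rightarrow> real)) list \<Rightarrow> real \<Rightarrow> real" where
  "sum_of_products fgs = (\<lambda>x. sum_list (map (\<lambda>(f,g). f x * g x) fgs))"

definition leibniz_terms ::
    "((real \<Rightarrow> real) \<times> (real \<Rightarrow> real)) list \<Rightarrow> ((real \<Rightarrow> real) \<times> (real \<Rightarrow> real)) list" where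
  "leibniz_terms fgs = concat (map (\<lambda>(f,g). [(deriv f, g), (f, deriv g)]) fgs)"

lemma sum_of_products_has_derivative:
  assumes "\<forall>(f,g)\<in>set fgs. smooth f \<and> smooth g"
  shows "(sum_of_products fgs has_real_derivative sum_of_products (leibniz_terms fgs) x) (at x)"
  using assms
proof (induction fgs)
  case Nil then show ?case by (simp add: sum_of_products_def leibniz_terms_def)
next
  case (Cons p fgs)
  obtain f g where p: "p = (f,g)" by fastforce
  have f: "(f has_real_derivative deriv f x) (at x)" and g: "(g has_real_derivative deriv g x) (at x)"
    using Cons.prems p smooth_differentiable by (auto simp: DERIV_deriv_iff_real_differentiable)
  have "((\<lambda>x. f x * g x + sum_of_products fgs x) has_real_derivative
      (deriv f x * g x + f x * deriv g x + sum_of_products (leibniz_terms fgs) x)) (at x)"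
    using Cons by (auto intro!: derivative_eq_intros f g)
  then show ?case by (simp add: p sum_of_products_def leibniz_terms_def algebra_simps)
qed

lemma smooth_sum_of_products:
  assumes "\<forall>(f,g)\<in>set fgs. smooth f \<and> smooth g"
  shows "smooth (sum_of_products fgs)"
proof (rule smooth_coinduct[where
      P="\<lambda>h. \<exists>fgs. (\<forall>(f,g)\<in>set fgs. smooth f \<and> smooth g) \<and> h = sum_of_products fgs"])
  fix h assume "\<exists>fgs. (\<forall>(f,g)\<in>set fgs. smooth f \<and> smooth g) \<and> h = sum_of_products fgs"
  then obtain fgs where fgs: "\<forall>(f,g)\<in>set fgs. smooth f \<and> smooth g" and h: "h = sum_of_products fgs"
    by blast
  have "deriv h = sum_of_products (leibniz_terms fgs)"
    using sum_of_products_has_derivative[OF fgs] DERIV_imp_deriv h by blast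
  moreover have "\<forall>(f,g)\<in>set (leibniz_terms fgs). smooth f \<and> smooth g"
    using fgs by (auto simp: leibniz_terms_def smooth_deriv)
  ultimately show "(\<forall>x. h differentiable at x) \<and>
      (\<exists>fgs. (\<forall>(f,g)\<in>set fgs. smooth f \<and> smooth g) \<and> deriv h = sum_of_products fgs)"
    using sum_of_products_has_derivative[OF fgs] h real_differentiable_def by blast
qed (use assms in auto)

lemma smooth_mult: "smooth f \<Longrightarrow> smooth g \<Longrightarrow> smooth (\<lambda>x. f x * g x)"
  using smooth_sum_of_products[of "[(f,g)]"] by (simp add: sum_of_products_def)

lemma smooth_diff: "smooth f \<Longrightarrow> smooth g \<Longrightarrow> smooth (\<lambda>x. f x - g x)"
  using smooth_sum_of_products[of "[(f,\<lambda>x. 1), (g, \<lambda>x. -1)]"] smooth_const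
  by (simp add: sum_of_products_def)

lemma smooth_cmult: "smooth f \<Longrightarrow> smooth (\<lambda>x. c * f x)"
  using smooth_mult[OF smooth_const] by blast

lemma tendsto_poly_div_exp_at_top: "((\<lambda>y. poly q y / exp y) \<longlongrightarrow> (0::real)) at_top"
proof -
  have "((\<lambda>y. \<Sum>i\<le>degree q. coeff q i * (y ^ i / exp y)) \<longlongrightarrow> (\<Sum>i\<le>degree q. coeff q i * 0)) at_top"
    by (intro tendsto_intros tendsto_power_div_exp_0)
  then show ?thesis by (simp add: poly_altdef sum_divide_distrib)
qed

lemma tendsto_poly_inverse_mult_exp_at_right:
  "((\<lambda>x. poly q (1/x) * exp (-1/x)) \<longlongrightarrow> (0::real)) (at_right 0)"
proof -
  have "((\<lambda>x. poly q (inverse x) / exp (inverse x)) \<longlongrightarrow> (0::real)) (at_right 0)"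
    using filterlim_compose[OF tendsto_poly_div_exp_at_top filterlim_inverse_at_top_right]
    by (simp add: o_def)
  moreover have "poly q (inverse x) / exp (inverse x) = poly q (1/x) * exp (-1/x)" for x :: real
    by (simp add: exp_minus inverse_eq_divide)
  ultimately show ?thesis by simp
qed

definition flat_fun :: "real poly \<Rightarrow> real \<Rightarrow> real" where
  "flat_fun p x = (if x > 0 then poly p (1/x) * exp (-1/x) else 0)"

(* (p(1/x) e^{-1/x})' = (p(1/x) - p'(1/x)) x^{-2} e^{-1/x} *)
definition flat_fun_deriv_poly :: "real poly \<Rightarrow> real poly" where
  "flat_fun_deriv_poly p = [:0,0,1:] * (p - pderiv p)"

lemma flat_fun_has_derivative_pos:
  assumes x: "x > 0"
  shows "(flat_fun p has_real_derivative flat_fun (flat_fun_deriv_poly p) x) (at x)"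
proof -
  have inv: "((\<lambda>x. 1/x) has_real_derivative (- ((1/x)^2))) (at x)"
    using x by (auto intro!: derivative_eq_intros simp: power2_eq_square field_simps)
  have "((\<lambda>x. poly p (1/x)) has_real_derivative poly (pderiv p) (1/x) * (- ((1/x)^2))) (at x)"
    by (rule DERIV_chain2[OF poly_DERIV inv])
  moreover have "((\<lambda>x. exp (-1/x)) has_real_derivative exp (-1/x) * ((1/x)^2)) (at x)"
    using x by (auto intro!: derivative_eq_intros simp: power2_eq_square field_simps)
  ultimately have "((\<lambda>x. poly p (1/x) * exp (-1/x)) has_real_derivative
      flat_fun (flat_fun_deriv_poly p) x) (at x)"
    using x by (auto dest: DERIV_mult
        simp: flat_fun_def flat_fun_deriv_poly_def power2_eq_square algebra_simps)
  then show ?thesis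
    by (rule has_field_derivative_transform_within_open[where S="{0<..}"])
      (use x in \<open>auto simp: flat_fun_def\<close>)
qed

lemma flat_fun_has_derivative_0: "(flat_fun p has_real_derivative 0) (at 0)"
proof -
  have "((\<lambda>y. flat_fun p y / y) \<longlongrightarrow> 0) (at_left 0)"
    by (rule tendsto_eventually)
      (use eventually_at_left_real[of "-1" 0] in \<open>auto elim!: eventually_mono simp: flat_fun_def\<close>)
  moreover have "((\<lambda>y. flat_fun p y / y) \<longlongrightarrow> 0) (at_right 0)"
  proof (rule Lim_transform_eventually[OF tendsto_poly_inverse_mult_exp_at_right])
    show "\<forall>\<^sub>F y in at_right 0. poly (p * [:0,1:]) (1/y) * exp (-1/y) = flat_fun p y / y"
      using eventually_at_right_real[of 0 1]
      by (auto elim!: eventually_mono simp: flat_fun_def field_simps)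
  qed
  ultimately have "((\<lambda>y. (flat_fun p y - flat_fun p 0) / (y - 0)) \<longlongrightarrow> 0) (at 0)"
    using filterlim_split_at by (simp add: flat_fun_def)
  then show ?thesis by (simp add: has_field_derivative_iff)
qed

lemma flat_fun_has_derivative:
  "(flat_fun p has_real_derivative flat_fun (flat_fun_deriv_poly p) x) (at x)"
proof -
  consider "x > 0" | "x < 0" | "x = 0" by linarith
  then show ?thesis
  proof cases
    case 2
    have "((\<lambda>x. 0) has_real_derivative 0) (at x)" by simp
    then have "(flat_fun p has_real_derivative 0) (at x)"
      by (rule has_field_derivative_transform_within_open[where S="{..<0}"])
        (use 2 in \<open>auto simp: flat_fun_def\<close>)
    then show ?thesis using 2 by (simp add: flat_fun_def)
  qed (use flat_fun_has_derivative_pos flat_fun_has_derivative_0 in \<open>auto simp: flat_fun_def\<close>)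
qed

lemma smooth_flat_fun: "smooth (flat_fun p)"
proof (rule smooth_coinduct[where P="\<lambda>h. \<exists>p. h = flat_fun p"])
  fix h assume "\<exists>p. h = flat_fun p"
  then obtain p where h: "h = flat_fun p" by blast
  have "deriv h = flat_fun (flat_fun_deriv_poly p)"
    unfolding h by (intro ext DERIV_imp_deriv flat_fun_has_derivative)
  then show "(\<forall>x. h differentiable at x) \<and> (\<exists>p. deriv h = flat_fun p)"
    using flat_fun_has_derivative h real_differentiable_def by blast
qed auto

definition bump :: "real \<Rightarrow> real" where
  "bump s = flat_fun 1 s * flat_fun 1 (1 - s)"

lemma smooth_bump: "smooth bump"
proof -
  have "smooth (\<lambda>s. flat_fun 1 ((-1) * s + 1))" by (intro smooth_compose_affine smooth_flat_fun)
  then show ?thesis unfolding bump_def[abs_def] by (intro smooth_mult smooth_flat_fun) simp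
qed

lemma bump_nonneg: "bump s \<ge> 0"
  by (simp add: bump_def flat_fun_def)

lemma bump_eq_0: "s \<le> 0 \<or> s \<ge> 1 \<Longrightarrow> bump s = 0"
  by (auto simp: bump_def flat_fun_def)

lemma bump_half_pos: "bump (1/2) > 0"
  by (simp add: bump_def flat_fun_def)

lemma continuous_on_bump: "continuous_on S bump"
  using smooth_differentiable[OF smooth_bump]
  by (meson continuous_at_imp_continuous_on differentiable_imp_continuous_within)

lemma bump_integrable: "bump integrable_on {a..b}"
  using continuous_on_bump integrable_continuous_real by blast

definition bump_mass :: real where
  "bump_mass = integral {-1..1} bump"

lemma bump_mass_pos: "bump_mass > 0"
proof -
  have "bump_mass \<noteq> 0"
  proof
    assume "bump_mass = 0"
    then have "(bump has_integral 0) (cbox (-1) 1)"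
      using bump_integrable unfolding bump_mass_def by (metis box_real(2) has_integral_integral)
    then have "bump (1/2) = 0"
      by (intro has_integral_0_cbox_imp_0[where a="-1" and b=1])
        (auto simp: continuous_on_bump bump_nonneg)
    then show False using bump_half_pos by simp
  qed
  moreover have "bump_mass \<ge> 0"
    unfolding bump_mass_def using bump_integrable bump_nonneg by (simp add: integral_nonneg)
  ultimately show ?thesis by simp
qed

definition smooth_step :: "real \<Rightarrow> real" where
  "smooth_step t = integral {-1..t} bump / bump_mass"

lemma smooth_step_eq_0: "t \<le> 0 \<Longrightarrow> smooth_step t = 0"
proof -
  assume "t \<le> 0"
  then have "integral {-1..t} bump = integral {-1..t} (\<lambda>_. 0::real)"
    by (intro integral_cong) (auto simp: bump_eq_0)
  then show ?thesis by (simp add: smooth_step_def)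
qed

lemma smooth_step_eq_1: "t \<ge> 1 \<Longrightarrow> smooth_step t = 1"
proof -
  assume t: "t \<ge> 1"
  have "integral {-1..1} bump + integral {1..t} bump = integral {-1..t} bump"
    by (rule Henstock_Kurzweil_Integration.integral_combine) (use t bump_integrable in auto)
  moreover have "integral {1..t} bump = integral {1..t} (\<lambda>_. 0::real)"
    by (intro integral_cong) (auto simp: bump_eq_0)
  ultimately show ?thesis using bump_mass_pos by (simp add: smooth_step_def bump_mass_def)
qed

lemma smooth_step_mono: "t \<le> t' \<Longrightarrow> smooth_step t \<le> smooth_step t'"
  unfolding smooth_step_def using bump_mass_pos
  by (intro divide_right_mono integral_subset_le) (auto simp: bump_integrable bump_nonneg)

lemma smooth_step_nonneg: "smooth_step t \<ge> 0"
  using smooth_step_mono[of 0 t] smooth_step_eq_0[of 0] smooth_step_eq_0[of t]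
  by (cases "t \<le> 0") auto

lemma smooth_step_le_1: "smooth_step t \<le> 1"
  using smooth_step_mono[of t 1] smooth_step_eq_1[of 1] smooth_step_eq_1[of t]
  by (cases "t \<le> 1") auto

lemma smooth_step_has_derivative: "(smooth_step has_real_derivative bump t / bump_mass) (at t)"
proof (cases "t > -1")
  case True
  have "((\<lambda>u. integral {-1..u} bump) has_vector_derivative bump t) (at t within {-1..t+1})"
    by (rule integral_has_vector_derivative) (use True continuous_on_bump in auto)
  moreover have "at t within {-1..t+1} = at t"
    by (rule at_within_interior) (use True in auto)
  ultimately have "((\<lambda>u. integral {-1..u} bump) has_real_derivative bump t) (at t)"
    by (simp add: has_real_derivative_iff_has_vector_derivative)
  then show ?thesis unfolding smooth_step_def[abs_def] by (rule DERIV_cdivide)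
next
  case False
  have "((\<lambda>x. 0) has_real_derivative 0) (at t)" by simp
  then have "(smooth_step has_real_derivative 0) (at t)"
    by (rule has_field_derivative_transform_within_open[where S="{..<0}"])
      (use False smooth_step_eq_0 in auto)
  then show ?thesis using False bump_eq_0[of t] by simp
qed

lemma smooth_smooth_step: "smooth smooth_step"
proof (rule smooth_from_deriv)
  show "smooth_step differentiable at x" for x
    using smooth_step_has_derivative real_differentiable_def by blast
  have "deriv smooth_step = (\<lambda>t. (1/bump_mass) * bump t)"
    using smooth_step_has_derivative by (intro ext DERIV_imp_deriv) simp
  then show "smooth (deriv smooth_step)" by (simp only: smooth_cmult smooth_bump)
qed

definition plateau :: "real \<Rightarrow> real \<Rightarrow> real \<Rightarrow> real \<Rightarrow> real" where
  "plateau x y e t = smooth_step ((t - x) / e) - smooth_step ((t - y) / e)"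

definition mollifier :: "real \<Rightarrow> real \<Rightarrow> real \<Rightarrow> real" where
  "mollifier e z t = bump ((t - z) / e) / (e * bump_mass)"

lemma smooth_step_affine_has_derivative:
  assumes "e > 0"
  shows "((\<lambda>t. smooth_step ((t - z) / e)) has_real_derivative mollifier e z t) (at t)"
proof -
  have "((\<lambda>t. (t - z) / e) has_real_derivative 1 / e) (at t)"
    using assms by (auto intro!: derivative_eq_intros)
  from DERIV_chain2[OF smooth_step_has_derivative this] show ?thesis
    by (simp add: mollifier_def mult.commute)
qed

lemma plateau_has_derivative:
  "e > 0 \<Longrightarrow> (plateau x y e has_real_derivative (mollifier e x t - mollifier e y t)) (at t)"
  unfolding plateau_def[abs_def] by (intro DERIV_diff smooth_step_affine_has_derivative)

lemma smooth_plateau: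
  assumes "e > 0" shows "smooth (plateau x y e)"
proof -
  have "smooth (\<lambda>t. smooth_step ((1/e) * t + (- x / e)) - smooth_step ((1/e) * t + (- y / e)))"
    by (intro smooth_diff smooth_compose_affine smooth_smooth_step)
  moreover have "(\<lambda>t. smooth_step ((1/e) * t + (- x / e)) - smooth_step ((1/e) * t + (- y / e)))
      = plateau x y e"
    unfolding plateau_def[abs_def] by (intro ext) (simp add: diff_divide_distrib)
  ultimately show ?thesis by simp
qed

lemma test_fun_plateau:
  assumes "e > 0" "-L < x" "x < y" "y + e < L"
  shows "test_fun L (plateau x y e)"
  unfolding test_fun_def
proof (intro conjI)
  show "\<forall>k x'. (deriv ^^ k) (plateau x y e) differentiable at x'"
    using smooth_plateau[OF assms(1)] unfolding smooth_def by blast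
  show "\<exists>\<delta>>0. \<forall>t. L - \<delta> \<le> \<bar>t\<bar> \<longrightarrow> plateau x y e t = 0"
  proof (intro exI[of _ "min (x + L) (L - y - e)"] conjI allI impI)
    show "0 < min (x + L) (L - y - e)" using assms by auto
    fix t assume "L - min (x + L) (L - y - e) \<le> \<bar>t\<bar>"
    then consider "t \<ge> y + e" | "t \<le> x" by (cases "t \<ge> 0") auto
    then show "plateau x y e t = 0"
    proof cases
      case 1
      then have "(t - x) / e \<ge> 1" "(t - y) / e \<ge> 1" using assms by (auto simp: field_simps)
      then show ?thesis by (simp add: plateau_def smooth_step_eq_1)
    next
      case 2
      then have "(t - x) / e \<le> 0" "(t - y) / e \<le> 0" using assms by (auto simp: field_simps)
      then show ?thesis by (simp add: plateau_def smooth_step_eq_0)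
    qed
  qed
qed

lemma plateau_nonneg: "e > 0 \<Longrightarrow> x \<le> y \<Longrightarrow> 0 \<le> plateau x y e t"
  by (simp add: plateau_def smooth_step_mono divide_right_mono)

lemma plateau_le_1: "plateau x y e t \<le> 1"
  using smooth_step_le_1[of "(t - x) / e"] smooth_step_nonneg[of "(t - y) / e"]
  by (simp add: plateau_def)

lemma continuous_on_plateau:
  assumes "e > 0" shows "continuous_on S (plateau x y e)"
proof -
  have "isCont (plateau x y e) t" for t by (rule DERIV_isCont[OF plateau_has_derivative[OF assms]])
  then show ?thesis by (simp add: continuous_at_imp_continuous_on)
qed

lemma continuous_on_mollifier: "e > 0 \<Longrightarrow> continuous_on S (mollifier e z)"
  unfolding mollifier_def[abs_def] using bump_mass_pos
  by (intro continuous_intros continuous_on_compose2[OF continuous_on_bump[of UNIV]]) auto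

lemma mollifier_nonneg: "e > 0 \<Longrightarrow> mollifier e z t \<ge> 0"
  using bump_mass_pos bump_nonneg by (simp add: mollifier_def)

lemma mollifier_eq_0: "e > 0 \<Longrightarrow> t \<le> z \<or> t \<ge> z + e \<Longrightarrow> mollifier e z t = 0"
proof -
  assume "e > 0" "t \<le> z \<or> t \<ge> z + e"
  then have "(t - z) / e \<le> 0 \<or> (t - z) / e \<ge> 1" by (auto simp: field_simps)
  then show ?thesis by (simp add: mollifier_def bump_eq_0)
qed

lemma integral_mollifier:
  assumes e: "e > 0" and z: "-L \<le> z" "z + e \<le> L"
  shows "integral {-L..L} (mollifier e z) = 1"
proof -
  have "(mollifier e z has_integral (smooth_step ((L - z) / e) - smooth_step ((-L - z) / e))) {-L..L}"
  proof (rule fundamental_theorem_of_calculus)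
    show "-L \<le> L" using z e by simp
    fix t
    show "((\<lambda>t. smooth_step ((t - z) / e)) has_vector_derivative mollifier e z t) (at t within {-L..L})"
      using smooth_step_affine_has_derivative[OF e]
      by (simp add: has_real_derivative_iff_has_vector_derivative has_vector_derivative_at_within)
  qed
  moreover have "smooth_step ((L - z) / e) = 1" using z e by (intro smooth_step_eq_1) (simp add: field_simps)
  moreover have "smooth_step ((-L - z) / e) = 0" using z e by (intro smooth_step_eq_0) (simp add: field_simps)
  ultimately show ?thesis by (simp add: integral_unique)
qed

lemma integral_mult_mollifier_dist_le:
  fixes u :: "real \<Rightarrow> real"
  assumes cu: "continuous_on {-L..L} u" and e: "e > 0" and z: "-L \<le> z" "z + e \<le> L"
    and close: "\<And>t. t \<in> {-L..L} \<Longrightarrow> z < t \<Longrightarrow> t < z + e \<Longrightarrow> \<bar>u t - u z\<bar> \<le> \<epsilon>"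
  shows "\<bar>integral {-L..L} (\<lambda>t. u t * mollifier e z t) - u z\<bar> \<le> \<epsilon>"
proof -
  define k where "k = mollifier e z"
  have kc: "continuous_on {-L..L} k" unfolding k_def using continuous_on_mollifier e by blast
  have k1: "integral {-L..L} k = 1" unfolding k_def using integral_mollifier e z by blast
  have "integral {-L..L} (\<lambda>t. u t * k t) - u z = integral {-L..L} (\<lambda>t. (u t - u z) * k t)"
    using k1 by (simp add: left_diff_distrib integral_diff integrable_continuous_real cu kc
        continuous_intros)
  moreover have "norm (integral {-L..L} (\<lambda>t. (u t - u z) * k t)) \<le> integral {-L..L} (\<lambda>t. \<epsilon> * k t)"
  proof (rule integral_norm_bound_integral)
    show "(\<lambda>t. (u t - u z) * k t) integrable_on {-L..L}" "(\<lambda>t. \<epsilon> * k t) integrable_on {-L..L}"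
      by (intro integrable_continuous_real continuous_intros cu kc)+
    fix t assume t: "t \<in> {-L..L}"
    have kn: "k t \<ge> 0" unfolding k_def using mollifier_nonneg e by blast
    show "norm ((u t - u z) * k t) \<le> \<epsilon> * k t"
    proof (cases "k t = 0")
      case False
      then have "z < t" "t < z + e" unfolding k_def using mollifier_eq_0[OF e, of t z] by force+
      then have "\<bar>u t - u z\<bar> * k t \<le> \<epsilon> * k t" using close[OF t] kn by (intro mult_right_mono)
      then show ?thesis using kn by (simp add: abs_mult)
    qed simp
  qed
  ultimately have "\<bar>integral {-L..L} (\<lambda>t. u t * k t) - u z\<bar> \<le> integral {-L..L} (\<lambda>t. \<epsilon> * k t)"
    by simp
  also have "\<dots> = \<epsilon>" using k1 by simp
  finally show ?thesis unfolding k_def .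
qed

lemma tendsto_integral_mult_mollifier:
  fixes u :: "real \<Rightarrow> real"
  assumes cu: "continuous_on {-L..L} u" and z: "-L \<le> z"
    and e: "\<And>n. e n > 0" and ez: "\<And>n. z + e n \<le> L" and lim: "e \<longlonglongrightarrow> 0"
  shows "(\<lambda>n. integral {-L..L} (\<lambda>t. u t * mollifier (e n) z t)) \<longlonglongrightarrow> u z"
proof (rule tendstoI)
  fix \<epsilon> :: real assume \<epsilon>: "\<epsilon> > 0"
  have "z \<in> {-L..L}" using z ez[of 0] e[of 0] by auto
  then obtain d where d: "d > 0" and dd: "\<And>t. t \<in> {-L..L} \<Longrightarrow> dist t z < d \<Longrightarrow> dist (u t) (u z) < \<epsilon>/2"
    using cu \<epsilon> unfolding continuous_on_iff by (metis half_gt_zero)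
  show "\<forall>\<^sub>F n in sequentially. dist (integral {-L..L} (\<lambda>t. u t * mollifier (e n) z t)) (u z) < \<epsilon>"
    using order_tendstoD(2)[OF lim d]
  proof (rule eventually_mono)
    fix n assume "e n < d"
    then have "\<bar>integral {-L..L} (\<lambda>t. u t * mollifier (e n) z t) - u z\<bar> \<le> \<epsilon>/2"
      using dd by (intro integral_mult_mollifier_dist_le[OF cu e z ez])
        (fastforce simp: dist_real_def intro: less_imp_le)
    then show "dist (integral {-L..L} (\<lambda>t. u t * mollifier (e n) z t)) (u z) < \<epsilon>"
      using \<epsilon> by (simp add: dist_real_def)
  qed
qed

lemma set_integral_greaterThanLessThan_continuous:
  fixes f :: "real \<Rightarrow> real"
  assumes "continuous_on {-L..L} f"
  shows "(LINT t:{-L<..<L}|lborel. f t) = integral {-L..L} f"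
proof -
  have "set_integrable lborel {-L..L} f"
    unfolding set_integrable_def using borel_integrable_compact[OF compact_Icc assms] .
  then have "set_integrable lborel {-L<..<L} f"
    by (rule set_integrable_subset) auto
  then show ?thesis by (simp add: set_borel_integral_eq_integral integral_open_interval_real)
qed

lemma plateau_tendsto_indicator:
  assumes lim: "e \<longlonglongrightarrow> 0" and e: "\<And>n. e n > 0" and xy: "x < y"
  shows "(\<lambda>n. plateau x y (e n) t) \<longlonglongrightarrow> indicator {x<..y} t"
proof (rule tendsto_eventually)
  consider "t \<le> x" | "x < t" "t \<le> y" | "y < t" by linarith
  then show "\<forall>\<^sub>F n in sequentially. plateau x y (e n) t = indicator {x<..y} t"
  proof cases
    case 1
    have "(t - x) / e n \<le> 0" "(t - y) / e n \<le> 0" for n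
      using 1 xy e[of n] by (auto simp: divide_le_0_iff)
    then show ?thesis using 1 by (simp add: plateau_def smooth_step_eq_0)
  next
    case 2
    have "\<forall>\<^sub>F n in sequentially. e n < t - x" using order_tendstoD(2)[OF lim] 2 by simp
    then show ?thesis
    proof (rule eventually_mono)
      fix n assume "e n < t - x"
      then have "(t - x) / e n \<ge> 1" "(t - y) / e n \<le> 0"
        using 2 e[of n] by (simp_all add: field_simps divide_le_0_iff)
      then show "plateau x y (e n) t = indicator {x<..y} t"
        using 2 by (simp add: plateau_def smooth_step_eq_0 smooth_step_eq_1)
    qed
  next
    case 3
    have "\<forall>\<^sub>F n in sequentially. e n < t - y" using order_tendstoD(2)[OF lim] 3 by simp
    then show ?thesis
    proof (rule eventually_mono)
      fix n assume "e n < t - y"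
      then have "(t - x) / e n \<ge> 1" "(t - y) / e n \<ge> 1"
        using 3 xy e[of n] by (simp_all add: field_simps)
      then show "plateau x y (e n) t = indicator {x<..y} t"
        using 3 by (simp add: plateau_def smooth_step_eq_1)
    qed
  qed
qed

lemma tendsto_set_integral_mult_plateau:
  fixes v :: "real \<Rightarrow> real"
  assumes v: "set_integrable lborel {-L<..<L} v"
    and lim: "e \<longlonglongrightarrow> 0" and e: "\<And>n. e n > 0" and xy: "x < y"
  shows "(\<lambda>n. LINT t:{-L<..<L}|lborel. v t * plateau x y (e n) t)
          \<longlonglongrightarrow> (LINT t:{-L<..<L}|lborel. v t * indicator {x<..y} t)"
  unfolding set_lebesgue_integral_def
proof (rule integral_dominated_convergence[where w="\<lambda>t. norm (indicator {-L<..<L} t *\<^sub>R v t)"])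
  have vi: "integrable lborel (\<lambda>t. indicator {-L<..<L} t *\<^sub>R v t)"
    using v by (simp add: set_integrable_def)
  then have vm: "(\<lambda>t. indicator {-L<..<L} t *\<^sub>R v t) \<in> borel_measurable lborel" by auto
  show "integrable lborel (\<lambda>t. norm (indicator {-L<..<L} t *\<^sub>R v t))" using vi by auto
  have "(\<lambda>t. indicator {-L<..<L} t *\<^sub>R (v t * indicator {x<..y} t)) =
      (\<lambda>t. (indicator {-L<..<L} t *\<^sub>R v t) * indicator {x<..y} t)" by auto
  then show "(\<lambda>t. indicator {-L<..<L} t *\<^sub>R (v t * indicator {x<..y} t)) \<in> borel_measurable lborel"
    using vm by simp
  fix n
  have pm: "plateau x y (e n) \<in> borel_measurable lborel"
    using borel_measurable_continuous_onI[OF continuous_on_plateau[OF e]] by simp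
  have "(\<lambda>t. indicator {-L<..<L} t *\<^sub>R (v t * plateau x y (e n) t)) =
      (\<lambda>t. (indicator {-L<..<L} t *\<^sub>R v t) * plateau x y (e n) t)" by auto
  then show "(\<lambda>t. indicator {-L<..<L} t *\<^sub>R (v t * plateau x y (e n) t)) \<in> borel_measurable lborel"
    using vm pm by simp
  show "AE t in lborel. norm (indicator {-L<..<L} t *\<^sub>R (v t * plateau x y (e n) t))
      \<le> norm (indicator {-L<..<L} t *\<^sub>R v t)"
    using plateau_nonneg[OF e, of x y] plateau_le_1[of x y "e n"] xy
    by (intro AE_I2) (auto simp: abs_mult indicator_def intro: mult_left_le)
next
  show "AE t in lborel. (\<lambda>n. indicator {-L<..<L} t *\<^sub>R (v t * plateau x y (e n) t)) \<longlonglongrightarrow>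
      indicator {-L<..<L} t *\<^sub>R (v t * indicator {x<..y} t)"
    by (intro AE_I2 tendsto_intros plateau_tendsto_indicator[OF lim e xy])
qed

lemma weak_deriv_on_plateau:
  fixes u v :: "real \<Rightarrow> real"
  assumes cu: "continuous_on {-L..L} u" and wd: "weak_deriv_on L u v"
    and e: "e > 0" and x: "-L < x" and xy: "x < y" and y: "y + e < L"
  shows "integral {-L..L} (\<lambda>t. u t * mollifier e x t) - integral {-L..L} (\<lambda>t. u t * mollifier e y t)
    = - (LINT t:{-L<..<L}|lborel. v t * plateau x y e t)"
proof -
  have "deriv (plateau x y e) = (\<lambda>t. mollifier e x t - mollifier e y t)"
    by (intro ext DERIV_imp_deriv plateau_has_derivative e)
  then have "(LINT t:{-L<..<L}|lborel. u t * deriv (plateau x y e) t)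
      = integral {-L..L} (\<lambda>t. u t * mollifier e x t - u t * mollifier e y t)"
    by (simp add: right_diff_distrib set_integral_greaterThanLessThan_continuous
        continuous_on_mollifier e cu continuous_intros)
  also have "\<dots> = integral {-L..L} (\<lambda>t. u t * mollifier e x t) - integral {-L..L} (\<lambda>t. u t * mollifier e y t)"
    by (intro integral_diff integrable_continuous_real continuous_intros cu continuous_on_mollifier e)
  finally show ?thesis
    using wd test_fun_plateau[OF e x xy y] unfolding weak_deriv_on_def by simp
qed

lemma weak_deriv_on_integral:
  fixes u v :: "real \<Rightarrow> real"
  assumes cu: "continuous_on {-L..L} u" and wd: "weak_deriv_on L u v"
    and x: "-L < x" and xy: "x < y" and y: "y < L"
  shows "v integrable_on {x..y}" "u y - u x = integral {x..y} v"
proof -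
  have vL: "set_integrable lborel {-L<..<L} v" using wd by (simp add: weak_deriv_on_def)
  have vxy: "set_integrable lborel {x..y} v" by (rule set_integrable_subset[OF vL]) (use x y in auto)
  then show "v integrable_on {x..y}" by (rule set_borel_integral_eq_integral(1))
  define e where "e n = ((L - y) / 2) / real (Suc n)" for n
  have e: "e n > 0" for n using y by (simp add: e_def)
  have ye: "y + e n < L" for n
  proof -
    have "e n \<le> (L - y) / 2" unfolding e_def using y divide_left_mono[of 1 "real (Suc n)" "(L - y) / 2"] by simp
    then show ?thesis using y by simp
  qed
  have elim: "e \<longlonglongrightarrow> 0"
    unfolding e_def using LIMSEQ_Suc[OF lim_const_over_n[of "(L - y) / 2"]] by simp
  have "(\<lambda>n. integral {-L..L} (\<lambda>t. u t * mollifier (e n) x t)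
      - integral {-L..L} (\<lambda>t. u t * mollifier (e n) y t)) \<longlonglongrightarrow> u x - u y"
    using x xy ye by (intro tendsto_diff tendsto_integral_mult_mollifier[OF cu _ e _ elim])
      (auto intro: less_imp_le add_strict_right_mono[THEN less_trans])
  moreover have "(\<lambda>n. integral {-L..L} (\<lambda>t. u t * mollifier (e n) x t)
      - integral {-L..L} (\<lambda>t. u t * mollifier (e n) y t))
      \<longlonglongrightarrow> - (LINT t:{-L<..<L}|lborel. v t * indicator {x<..y} t)"
    unfolding weak_deriv_on_plateau[OF cu wd e x xy ye]
    by (intro tendsto_minus tendsto_set_integral_mult_plateau[OF vL elim e xy])
  ultimately have "u x - u y = - (LINT t:{-L<..<L}|lborel. v t * indicator {x<..y} t)"
    by (rule LIMSEQ_unique)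
  moreover have "(LINT t:{-L<..<L}|lborel. v t * indicator {x<..y} t) = (LINT t:{x..y}|lborel. v t)"
    unfolding set_lebesgue_integral_def
    by (rule integral_discrete_difference[where X="{x}"]) (use x y xy in \<open>auto simp: indicator_def\<close>)
  ultimately show "u y - u x = integral {x..y} v"
    using set_borel_integral_eq_integral(2)[OF vxy] by simp
qed

lemma integral_pos_continuous:
  fixes f :: "real \<Rightarrow> real"
  assumes "c < d" and f: "continuous_on {c..d} f" and pos: "\<And>x. x \<in> {c..d} \<Longrightarrow> f x > 0"
  shows "integral {c..d} f > 0"
proof -
  obtain x0 where x0: "x0 \<in> {c..d}" and min: "\<And>y. y \<in> {c..d} \<Longrightarrow> f x0 \<le> f y"
    using continuous_attains_inf[OF compact_Icc _ f] \<open>c < d\<close> by fastforce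
  have "(d - c) * f x0 = integral {c..d} (\<lambda>_. f x0)" using \<open>c < d\<close> by simp
  also have "\<dots> \<le> integral {c..d} f"
    by (rule integral_le) (auto intro: integrable_continuous_real f min)
  finally have "(d - c) * f x0 \<le> integral {c..d} f" .
  moreover have "(d - c) * f x0 > 0" using \<open>c < d\<close> pos[OF x0] by simp
  ultimately show ?thesis by linarith
qed

lemma integral_sq_mult_ge:
  fixes v a :: "real \<Rightarrow> real"
  assumes "c < d" and v: "v integrable_on {c..d}"
    and va: "(\<lambda>t. (v t)\<^sup>2 * a t) integrable_on {c..d}"
    and a: "continuous_on {c..d} a" "\<And>t. t \<in> {c..d} \<Longrightarrow> a t > 0"
  shows "(integral {c..d} v)\<^sup>2 / integral {c..d} (\<lambda>t. 1 / a t) \<le> integral {c..d} (\<lambda>t. (v t)\<^sup>2 * a t)"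
proof -
  define Q where "Q = integral {c..d} (\<lambda>t. 1 / a t)"
  define J where "J = integral {c..d} v"
  define k where "k = J / Q"
  have ia: "continuous_on {c..d} (\<lambda>t. 1 / a t)"
    using a by (intro continuous_intros) (auto simp: less_imp_neq[symmetric])
  have "Q > 0" unfolding Q_def using integral_pos_continuous[OF \<open>c < d\<close> ia] a by simp
  have i1: "(\<lambda>t. 2 * k * v t) integrable_on {c..d}" using integrable_on_cmult_left[OF v] by simp
  have i2: "(\<lambda>t. k\<^sup>2 * (1 / a t)) integrable_on {c..d}"
    using integrable_on_cmult_left[OF integrable_continuous_real[OF ia]] by simp
  \<comment> \<open>integrate \<open>2 k v - k\<^sup>2/a \<le> v\<^sup>2 a\<close>, which holds as the difference is \<open>a (v - k/a)\<^sup>2\<close>\<close>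
  have "J\<^sup>2 / Q = 2 * k * J - k\<^sup>2 * Q"
    using \<open>Q > 0\<close> unfolding k_def by (simp add: power2_eq_square field_simps)
  also have "\<dots> = integral {c..d} (\<lambda>t. 2 * k * v t - k\<^sup>2 * (1 / a t))"
    unfolding J_def Q_def by (subst integral_diff[OF i1 i2]) (simp only: integral_mult_right)
  also have "\<dots> \<le> integral {c..d} (\<lambda>t. (v t)\<^sup>2 * a t)"
  proof (rule integral_le[OF integrable_diff[OF i1 i2] va])
    fix t assume "t \<in> {c..d}"
    then have "a t > 0" by (rule a(2))
    then have "0 \<le> a t * (v t - k / a t)\<^sup>2" by simp
    also have "\<dots> = (v t)\<^sup>2 * a t - (2 * k * v t - k\<^sup>2 * (1 / a t))"
      using \<open>a t > 0\<close> by (simp add: power2_eq_square field_simps)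
    finally show "2 * k * v t - k\<^sup>2 * (1 / a t) \<le> (v t)\<^sup>2 * a t" by simp
  qed
  finally show ?thesis unfolding J_def Q_def .
qed

lemma set_integrable_sq_mult_continuous:
  fixes v a :: "real \<Rightarrow> real"
  assumes v: "set_borel_measurable lborel {-L<..<L} v"
    and v2: "set_integrable lborel {-L<..<L} (\<lambda>x. (v x)\<^sup>2)"
    and a: "continuous_on UNIV a"
  shows "set_integrable lborel {-L..L} (\<lambda>x. (v x)\<^sup>2 * a x)"
proof -
  obtain K where K: "\<And>x. x \<in> {-L..L} \<Longrightarrow> \<bar>a x\<bar> \<le> K"
    using compact_imp_bounded[OF compact_continuous_image[OF continuous_on_subset[OF a] compact_Icc]]
    unfolding bounded_iff by fastforce
  have "(\<lambda>x. indicator {-L<..<L} x *\<^sub>R v x) \<in> borel_measurable lborel"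
    using v by (simp add: set_borel_measurable_def)
  moreover have "a \<in> borel_measurable lborel"
    using borel_measurable_continuous_onI[OF a] by simp
  moreover have "(\<lambda>x. indicator {-L<..<L} x *\<^sub>R ((v x)\<^sup>2 * a x))
      = (\<lambda>x. (indicator {-L<..<L} x *\<^sub>R v x)\<^sup>2 * a x)"
    by (auto simp: indicator_def)
  ultimately have meas: "(\<lambda>x. indicator {-L<..<L} x *\<^sub>R ((v x)\<^sup>2 * a x)) \<in> borel_measurable lborel"
    by simp
  have "set_integrable lborel {-L<..<L} (\<lambda>x. (v x)\<^sup>2 * a x)"
    unfolding set_integrable_def
  proof (rule Bochner_Integration.integrable_bound[OF _ meas])
    show "integrable lborel (\<lambda>x. K * (indicator {-L<..<L} x *\<^sub>R (v x)\<^sup>2))"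
      using v2 unfolding set_integrable_def by (rule integrable_mult_right)
    have "\<bar>(v x)\<^sup>2 * a x\<bar> \<le> \<bar>K * (v x)\<^sup>2\<bar>" if "x \<in> {-L<..<L}" for x
    proof -
      have "(v x)\<^sup>2 * \<bar>a x\<bar> \<le> (v x)\<^sup>2 * K" using K[of x] that by (intro mult_left_mono) auto
      also have "\<dots> \<le> \<bar>K * (v x)\<^sup>2\<bar>" by (simp add: abs_mult mult.commute mult_right_mono)
      finally show ?thesis by (simp add: abs_mult)
    qed
    then show "AE x in lborel. norm (indicator {-L<..<L} x *\<^sub>R ((v x)\<^sup>2 * a x))
        \<le> norm (K * (indicator {-L<..<L} x *\<^sub>R (v x)\<^sup>2))"
      by (intro AE_I2) (simp add: indicator_def)
  qed
  moreover have "integrable lborel (\<lambda>x. indicator {-L<..<L} x *\<^sub>R ((v x)\<^sup>2 * a x)) \<longleftrightarrow>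
      integrable lborel (\<lambda>x. indicator {-L..L} x *\<^sub>R ((v x)\<^sup>2 * a x))"
    by (rule integrable_discrete_difference[where X="{-L, L}"]) (auto simp: indicator_def)
  ultimately show ?thesis unfolding set_integrable_def by simp
qed

lemma integral_energy_density_ge:
  fixes v a b u G :: "real \<Rightarrow> real"
  assumes "c < d" and v: "v integrable_on {c..d}"
    and va: "(\<lambda>t. (v t)\<^sup>2 * a t) integrable_on {c..d}"
    and Gb: "(\<lambda>t. G (u t) * b t) integrable_on {c..d}"
    and a: "continuous_on {c..d} a" "\<And>t. t \<in> {c..d} \<Longrightarrow> a t > 0"
    and b: "continuous_on {c..d} b" "\<And>t. t \<in> {c..d} \<Longrightarrow> b t > 0"
    and G0: "\<And>t. t \<in> {c..d} \<Longrightarrow> G0 \<le> G (u t)"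
  shows "(1/2) * ((integral {c..d} v)\<^sup>2 / integral {c..d} (\<lambda>t. 1 / a t)) + G0 * integral {c..d} b
    \<le> integral {c..d} (\<lambda>x. (1/2) * (v x)\<^sup>2 * a x + G (u x) * b x)"
proof -
  have "G0 * integral {c..d} b = integral {c..d} (\<lambda>x. G0 * b x)" by simp
  also have "\<dots> \<le> integral {c..d} (\<lambda>x. G (u x) * b x)"
    using G0 b by (intro integral_le Gb integrable_continuous_real continuous_intros)
      (auto intro: mult_right_mono less_imp_le)
  finally have "G0 * integral {c..d} b \<le> integral {c..d} (\<lambda>x. G (u x) * b x)" .
  moreover have "(integral {c..d} v)\<^sup>2 / integral {c..d} (\<lambda>t. 1 / a t)
      \<le> integral {c..d} (\<lambda>t. (v t)\<^sup>2 * a t)"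
    by (rule integral_sq_mult_ge[OF \<open>c < d\<close> v va a])
  moreover have "integral {c..d} (\<lambda>x. (1/2) * (v x)\<^sup>2 * a x + G (u x) * b x)
      = (1/2) * integral {c..d} (\<lambda>x. (v x)\<^sup>2 * a x) + integral {c..d} (\<lambda>x. G (u x) * b x)"
    using integrable_on_cmult_left[OF va, of "1/2"] Gb by (simp add: integral_add mult.assoc)
  ultimately show ?thesis by linarith
qed

lemma Inf_image_le_even:
  fixes G :: "real \<Rightarrow> real"
  assumes G: "continuous_on UNIV G" "\<And>s. G (-s) = G s" "\<And>s. G s \<ge> 0"
    and "m0 > 0" and s: "\<bar>s\<bar> \<le> m0"
  shows "Inf (G ` {0<..<m0}) \<le> G s"
proof -
  have "{0<..<m0} \<subseteq> {s. Inf (G ` {0<..<m0}) \<le> G s}"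
    using G(3) by (auto intro!: cInf_lower bdd_belowI)
  moreover have "closed {s. Inf (G ` {0<..<m0}) \<le> G s}"
    by (rule closed_Collect_le) (auto intro: G(1))
  ultimately have "closure {0<..<m0} \<subseteq> {s. Inf (G ` {0<..<m0}) \<le> G s}"
    by (rule closure_minimal)
  then have "Inf (G ` {0<..<m0}) \<le> G \<bar>s\<bar>" using \<open>m0 > 0\<close> s by (auto simp: subset_eq)
  then show ?thesis by (cases "s \<ge> 0") (simp_all add: G(2))
qed

lemma Inf_image_pos:
  fixes G :: "real \<Rightarrow> real"
  assumes G: "continuous_on {0..m0} G" "\<And>s. 0 \<le> s \<Longrightarrow> s \<le> m0 \<Longrightarrow> G s > 0" and "m0 > 0"
  shows "Inf (G ` {0<..<m0}) > 0"
proof -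
  obtain s0 where s0: "s0 \<in> {0..m0}" and min: "\<And>s. s \<in> {0..m0} \<Longrightarrow> G s0 \<le> G s"
    using continuous_attains_inf[OF compact_Icc _ G(1)] \<open>m0 > 0\<close> by fastforce
  have "G s0 \<le> Inf (G ` {0<..<m0})"
    using \<open>m0 > 0\<close> min by (intro cInf_greatest) auto
  moreover have "G s0 > 0" using s0 G(2) by auto
  ultimately show ?thesis by simp
qed

definition energy_profile :: "(real \<Rightarrow> real) \<Rightarrow> (real \<Rightarrow> real) \<Rightarrow> real \<Rightarrow> real \<Rightarrow> real \<Rightarrow> real" where
  "energy_profile a b m0 G0 t = m0\<^sup>2 / integral {0..t} (\<lambda>x. 1 / a x) + 2 * G0 * integral {0..t} b"

lemma energy_profile_uniform_lower_bound:
  fixes a b :: "real \<Rightarrow> real"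
  assumes a: "continuous_on UNIV a" "\<And>x. a x > 0" and b: "continuous_on UNIV b" "\<And>x. b x > 0"
    and "m0 > 0" "G0 > 0"
  obtains c where "c > 0" "\<And>t. t > 0 \<Longrightarrow> c \<le> energy_profile a b m0 G0 t"
proof -
  define A where "A t = integral {0..t} (\<lambda>x. 1 / a x)" for t
  define B where "B t = integral {0..t} b" for t
  have ia: "continuous_on S (\<lambda>x. 1 / a x)" for S
    using a by (intro continuous_intros continuous_on_subset[OF a(1)]) (auto simp: less_imp_neq[symmetric])
  have ib: "continuous_on S b" for S using continuous_on_subset[OF b(1)] by auto
  have A_pos: "A t > 0" and B_pos: "B t > 0" if "t > 0" for t
    unfolding A_def B_def using that a b by (auto intro!: integral_pos_continuous ia ib)
  have A_mono: "A t \<le> A t'" if "t \<le> t'" for t t'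
    unfolding A_def using that a by (intro integral_subset_le integrable_continuous_real ia)
      (auto simp: less_imp_le)
  have B_mono: "B t \<le> B t'" if "t \<le> t'" for t t'
    unfolding B_def using that b by (intro integral_subset_le integrable_continuous_real ib)
      (auto simp: less_imp_le)
  show ?thesis
  proof
    show "min (m0\<^sup>2 / A 1) (2 * G0 * B 1) > 0" using A_pos B_pos \<open>m0 > 0\<close> \<open>G0 > 0\<close> by simp
    fix t :: real assume "t > 0"
    show "min (m0\<^sup>2 / A 1) (2 * G0 * B 1) \<le> energy_profile a b m0 G0 t"
    proof (cases "t \<le> 1")
      case True
      then have "m0\<^sup>2 / A 1 \<le> m0\<^sup>2 / A t"
        using A_mono A_pos \<open>t > 0\<close> by (intro divide_left_mono) auto
      moreover have "0 \<le> 2 * G0 * B t" using B_pos[OF \<open>t > 0\<close>] \<open>G0 > 0\<close> by simp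
      ultimately show ?thesis unfolding energy_profile_def A_def[symmetric] B_def[symmetric] by linarith
    next
      case False
      then have "2 * G0 * B 1 \<le> 2 * G0 * B t" using B_mono \<open>G0 > 0\<close> by simp
      moreover have "0 \<le> m0\<^sup>2 / A t" using A_pos[OF \<open>t > 0\<close>] by simp
      ultimately show ?thesis unfolding energy_profile_def A_def[symmetric] B_def[symmetric] by linarith
    qed
  qed
qed

lemma first_exit_point:
  fixes u :: "real \<Rightarrow> real"
  assumes u: "continuous_on {0..L} u" and "0 \<le> L" and start: "\<bar>u 0\<bar> < c" and "c \<le> \<bar>u L\<bar>"
  obtains \<beta> where "0 < \<beta>" "\<beta> \<le> L" "\<bar>u \<beta>\<bar> = c" "\<And>t. t \<in> {0..\<beta>} \<Longrightarrow> \<bar>u t\<bar> \<le> c"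
proof -
  define T where "T = {0..L} \<inter> (\<lambda>t. \<bar>u t\<bar>) -` {c..}"
  have "closed T" unfolding T_def
    by (rule continuous_closed_preimage) (auto intro: continuous_intros u)
  moreover have "L \<in> T" "bdd_below T" unfolding T_def using assms by auto
  ultimately have "Inf T \<in> T" using closed_contains_Inf by blast
  then have "0 \<le> Inf T" "Inf T \<le> L" "c \<le> \<bar>u (Inf T)\<bar>" unfolding T_def by auto
  have below: "\<bar>u t\<bar> < c" if "t \<in> {0..<Inf T}" for t
    using that cInf_lower[OF _ \<open>bdd_below T\<close>, of t] \<open>Inf T \<le> L\<close> unfolding T_def by force
  have "0 < Inf T" using \<open>c \<le> \<bar>u (Inf T)\<bar>\<close> start \<open>0 \<le> Inf T\<close> by (cases "Inf T = 0") auto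
  have "closed ({0..Inf T} \<inter> (\<lambda>t. \<bar>u t\<bar>) -` {..c})"
    using \<open>Inf T \<le> L\<close> by (intro continuous_closed_preimage continuous_intros continuous_on_subset[OF u]) auto
  moreover have "{0..<Inf T} \<subseteq> {0..Inf T} \<inter> (\<lambda>t. \<bar>u t\<bar>) -` {..c}"
    using below by (auto simp: less_imp_le)
  ultimately have "closure {0..<Inf T} \<subseteq> {0..Inf T} \<inter> (\<lambda>t. \<bar>u t\<bar>) -` {..c}"
    by (intro closure_minimal)
  then have bound: "\<bar>u t\<bar> \<le> c" if "t \<in> {0..Inf T}" for t
    using that \<open>0 < Inf T\<close> by auto
  show ?thesis
    by (rule that[OF \<open>0 < Inf T\<close> \<open>Inf T \<le> L\<close> _ bound])
      (use bound[of "Inf T"] \<open>c \<le> \<bar>u (Inf T)\<bar>\<close> \<open>0 \<le> Inf T\<close> in auto)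
qed

lemma energy_eq_integral:
  assumes H: "H1_with_deriv L u v"
    and a: "continuous_on UNIV a" and b: "continuous_on UNIV b" and G: "continuous_on UNIV G"
  shows "(\<lambda>x. (v x)\<^sup>2 * a x) integrable_on {-L..L}"
    and "(\<lambda>x. G (u x) * b x) integrable_on {-L..L}"
    and "energy a b G L u v = integral {-L..L} (\<lambda>x. (1/2) * (v x)\<^sup>2 * a x + G (u x) * b x)"
proof -
  have va: "set_integrable lborel {-L..L} (\<lambda>x. (v x)\<^sup>2 * a x)"
    using H a by (intro set_integrable_sq_mult_continuous) (auto simp: H1_with_deriv_def)
  have "continuous_on {-L..L} (\<lambda>x. G (u x) * b x)"
    using H by (intro continuous_intros continuous_on_compose2[OF G] continuous_on_subset[OF b])
      (auto simp: H1_with_deriv_def)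
  then have Gb: "set_integrable lborel {-L..L} (\<lambda>x. G (u x) * b x)"
    unfolding set_integrable_def using borel_integrable_compact[OF compact_Icc] by blast
  show "(\<lambda>x. (v x)\<^sup>2 * a x) integrable_on {-L..L}" "(\<lambda>x. G (u x) * b x) integrable_on {-L..L}"
    using va Gb by (simp_all add: set_borel_integral_eq_integral)
  have "set_integrable lborel {-L..L} (\<lambda>x. (1/2) * ((v x)\<^sup>2 * a x) + G (u x) * b x)"
    by (intro set_integral_add(1) set_integrable_mult_right va Gb)
  then show "energy a b G L u v = integral {-L..L} (\<lambda>x. (1/2) * (v x)\<^sup>2 * a x + G (u x) * b x)"
    unfolding energy_def by (simp add: set_borel_integral_eq_integral mult.assoc)
qed

lemma energy_ge_energy_profile:
  fixes a b G u v :: "real \<Rightarrow> real"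
  assumes a: "continuous_on UNIV a" "\<And>x. a (-x) = a x" "\<And>x. a x > 0"
    and b: "continuous_on UNIV b" "\<And>x. b (-x) = b x" "\<And>x. b x > 0"
    and G: "continuous_on UNIV G" "\<And>s. G s \<ge> 0"
    and H: "H1_with_deriv L u v" and \<beta>: "0 < \<beta>" "\<beta> < L"
    and u: "u 0 = 0" "u (-\<beta>) = - u \<beta>" "\<bar>u \<beta>\<bar> = m0"
    and G0: "\<And>t. t \<in> {-\<beta>..\<beta>} \<Longrightarrow> G0 \<le> G (u t)"
  shows "energy_profile a b m0 G0 \<beta> \<le> energy a b G L u v"
proof -
  define F where "F x = (1/2) * (v x)\<^sup>2 * a x + G (u x) * b x" for x
  note integrable = energy_eq_integral[OF H a(1) b(1) G(1)]
  have F: "F integrable_on {-L..L}"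
    using integrable_add[OF integrable_on_cmult_left[OF integrable(1), of "1/2"] integrable(2)]
    by (simp add: F_def[abs_def] mult.assoc)
  have F_nonneg: "F x \<ge> 0" for x unfolding F_def using G(2)[of "u x"] a(3)[of x] b(3)[of x] by simp
  have half: "(1/2) * (m0\<^sup>2 / integral {c..d} (\<lambda>t. 1 / a t)) + G0 * integral {c..d} b
      \<le> integral {c..d} F" if cd: "(c, d) \<in> {(-\<beta>, 0), (0, \<beta>)}" for c d
  proof -
    have "c < d" "-L < c" "d < L" and sub: "{c..d} \<subseteq> {-L..L}" "{c..d} \<subseteq> {-\<beta>..\<beta>}"
      using cd \<beta> by auto
    have cu: "continuous_on {-L..L} u" and wd: "weak_deriv_on L u v"
      using H by (auto simp: H1_with_deriv_def)
    note ftc = weak_deriv_on_integral[OF cu wd \<open>-L < c\<close> \<open>c < d\<close> \<open>d < L\<close>]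
    have "(integral {c..d} v)\<^sup>2 = m0\<^sup>2"
      using ftc(2) cd u by (auto simp: power2_eq_square)
    moreover have "(1/2) * ((integral {c..d} v)\<^sup>2 / integral {c..d} (\<lambda>t. 1 / a t))
        + G0 * integral {c..d} b \<le> integral {c..d} F"
      unfolding F_def
    proof (rule integral_energy_density_ge[OF \<open>c < d\<close> ftc(1)])
      show "(\<lambda>t. (v t)\<^sup>2 * a t) integrable_on {c..d}" "(\<lambda>t. G (u t) * b t) integrable_on {c..d}"
        using integrable(1,2) sub(1) by (auto intro: integrable_on_subinterval)
      show "continuous_on {c..d} a" "continuous_on {c..d} b"
        using a(1) b(1) by (auto intro: continuous_on_subset)
    qed (use a(3) b(3) G0 sub(2) in auto)
    ultimately show ?thesis by simp
  qed
  have "integral {-\<beta>..0} (\<lambda>t. 1 / a t) = integral {0..\<beta>} (\<lambda>t. 1 / a t)"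
    using Henstock_Kurzweil_Integration.integral_reflect_real[of \<beta> 0 "\<lambda>t. 1 / a t"] by (simp add: a(2))
  moreover have "integral {-\<beta>..0} b = integral {0..\<beta>} b"
    using Henstock_Kurzweil_Integration.integral_reflect_real[of \<beta> 0 b] by (simp add: b(2))
  moreover have "integral {-\<beta>..0} F + integral {0..\<beta>} F = integral {-\<beta>..\<beta>} F"
    using \<beta> integrable_on_subinterval[OF F]
    by (intro Henstock_Kurzweil_Integration.integral_combine) auto
  moreover have "integral {-\<beta>..\<beta>} F \<le> integral {-L..L} F"
    using \<beta> F_nonneg by (intro integral_subset_le integrable_on_subinterval[OF F] F) auto
  ultimately show ?thesis
    using half[of "-\<beta>" 0] half[of 0 \<beta>] integrable(3)
    unfolding energy_profile_def F_def[symmetric] by (simp add: field_simps)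
qed

lemma odd_energy_ge_energy_profile:
  fixes a b G u v :: "real \<Rightarrow> real"
  assumes a: "continuous_on UNIV a" "\<And>x. a (-x) = a x" "\<And>x. a x > 0"
    and b: "continuous_on UNIV b" "\<And>x. b (-x) = b x" "\<And>x. b x > 0"
    and G: "continuous_on UNIV G" "\<And>s. G s \<ge> 0"
    and "L > 0" and H: "H1m_with_deriv m L u v" and odd: "\<And>x. x \<in> {-L..L} \<Longrightarrow> u (-x) = - u x"
    and "0 < m0" "m0 < m" and G0: "\<And>s. \<bar>s\<bar> \<le> m0 \<Longrightarrow> G0 \<le> G s"
  obtains \<beta> where "\<beta> > 0" "energy_profile a b m0 G0 \<beta> \<le> energy a b G L u v"
proof -
  have H1: "H1_with_deriv L u v" and "u L = m" using H by (auto simp: H1m_with_deriv_def)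
  have "u 0 = 0" using odd[of 0] \<open>L > 0\<close> by simp
  obtain \<beta> where \<beta>: "0 < \<beta>" "\<beta> \<le> L" "\<bar>u \<beta>\<bar> = m0" and bound: "\<And>t. t \<in> {0..\<beta>} \<Longrightarrow> \<bar>u t\<bar> \<le> m0"
    by (rule first_exit_point[of L u m0])
      (use H1 \<open>L > 0\<close> \<open>u 0 = 0\<close> \<open>u L = m\<close> \<open>0 < m0\<close> \<open>m0 < m\<close> in
        \<open>auto simp: H1_with_deriv_def intro: continuous_on_subset\<close>)
  have "\<beta> < L" using \<beta> \<open>u L = m\<close> \<open>m0 < m\<close> \<open>0 < m0\<close> by (cases "\<beta> = L") auto
  have "\<bar>u t\<bar> \<le> m0" if "t \<in> {-\<beta>..\<beta>}" for t
    using bound[of t] bound[of "-t"] odd[of t] that \<beta> by (cases "t \<ge> 0") auto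
  then have "energy_profile a b m0 G0 \<beta> \<le> energy a b G L u v"
    using odd[of \<beta>] \<beta> \<open>\<beta> < L\<close>
    by (intro energy_ge_energy_profile[OF a b G H1 \<open>0 < \<beta>\<close> \<open>\<beta> < L\<close> \<open>u 0 = 0\<close>] G0) auto
  with \<open>0 < \<beta>\<close> show ?thesis by (rule that)
qed

theorem proposition5p7:
  fixes a b G :: "real \<Rightarrow> real" and M m :: real
  assumes a_cont: "continuous_on UNIV a" and a_even: "\<And>x. a (-x) = a x" and a_pos: "\<And>x. a x > 0"
      and b_cont: "continuous_on UNIV b" and b_even: "\<And>x. b (-x) = b x" and b_pos: "\<And>x. b x > 0"
      and G_cont: "continuous_on UNIV G" and G_even: "\<And>s. G (-s) = G s"
      and M_pos: "M > 0" and G_M: "G M = 0" and G_ge: "\<And>s. G s \<ge> G M"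
      and G_pos: "\<And>s. 0 \<le> s \<Longrightarrow> s < M \<Longrightarrow> G s > 0"
      and m_pos: "m > 0"
  shows "C_as a b G M m > 0 \<and>
         (\<forall>L u v. L > 0 \<longrightarrow> H1m_with_deriv m L u v \<longrightarrow> (\<forall>x\<in>{-L..L}. u (-x) = - u x) \<longrightarrow>
             energy a b G L u v \<ge> C_as a b G M m)"
proof -
  define m0 where "m0 = (1/2) * min m M"
  define G0 where "G0 = Inf (G ` {0<..<m0})"
  have m0: "0 < m0" "m0 < M" "m0 < m" using m_pos M_pos unfolding m0_def by auto
  have G_nonneg: "G s \<ge> 0" for s using G_ge[of s] G_M by simp
  have "G0 > 0"
    unfolding G0_def using m0 G_pos by (intro Inf_image_pos continuous_on_subset[OF G_cont]) auto
  then obtain c where "c > 0" and c: "\<And>t. t > 0 \<Longrightarrow> c \<le> energy_profile a b m0 G0 t"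
    using energy_profile_uniform_lower_bound[OF a_cont a_pos b_cont b_pos \<open>0 < m0\<close>] by blast
  have C_as: "C_as a b G M m = Inf (energy_profile a b m0 G0 ` {0<..})"
    unfolding C_as_def energy_profile_def[abs_def] m0_def G0_def Let_def ..
  have "c \<le> C_as a b G M m" unfolding C_as using c by (intro cInf_greatest) auto
  moreover have "C_as a b G M m \<le> energy a b G L u v"
    if L: "L > 0" and H: "H1m_with_deriv m L u v" and odd: "\<forall>x\<in>{-L..L}. u (-x) = - u x" for L u v
  proof -
    obtain \<beta> where "\<beta> > 0" "energy_profile a b m0 G0 \<beta> \<le> energy a b G L u v"
      using odd_energy_ge_energy_profile[OF a_cont a_even a_pos b_cont b_even b_pos G_cont G_nonneg
          L H _ m0(1,3), of G0] odd Inf_image_le_even[OF G_cont G_even G_nonneg m0(1)]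
      unfolding G0_def by blast
    moreover have "bdd_below (energy_profile a b m0 G0 ` {0<..})" using c by (intro bdd_belowI[of _ c]) auto
    ultimately show ?thesis unfolding C_as by (meson cInf_lower greaterThan_iff imageI order_trans)
  qed
  ultimately show ?thesis using \<open>c > 0\<close> by auto
qed

end
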